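(* Let $\varepsilon>0$ and $\theta,\bar\theta,\varphi,\bar\varphi,\alpha,\bar\alpha\in\mathbb{R}$ with $|\theta-\bar\theta|,|\varphi-\bar\varphi|,|\alpha-\bar\alpha|\le\varepsilon$. Then \[ \|R(\alpha)M(\theta,\varphi)-R(\bar\alpha)M(\bar\theta,\bar\varphi)\|<\sqrt5\varepsilon. \]
   Context: $R(\alpha)=\begin{pmatrix}\cos\alpha&-\sin\alpha\\ \sin\alpha&\cos\alpha\end{pmatrix}$, $M(\theta,\varphi)=\begin{pmatrix}-\sin\theta&\cos\theta&0\\ -\cos\theta\cos\varphi&-\sin\theta\cos\varphi&\sin\varphi\end{pmatrix}$; $\|\cdot\|$ is the operator norm induced by Euclidean norms. *)

theory Defs
  imports "HOL-Analysis.Analysis"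
begin

definition rotR :: "real \<Rightarrow> real^2^2" where
  "rotR \<alpha> = vector [vector [cos \<alpha>, - sin \<alpha>], vector [sin \<alpha>, cos \<alpha>]]"

definition matM :: "real \<Rightarrow> real \<Rightarrow> real^3^2" where
  "matM \<theta> \<phi> = vector [vector [- sin \<theta>, cos \<theta>, 0],
                        vector [- cos \<theta> * cos \<phi>, - sin \<theta> * cos \<phi>, sin \<phi>]]"

definition opnorm :: "real^'n^'m \<Rightarrow> real" where
  "opnorm A = onorm (\<lambda>x. A *v x)"

end

(*
  Let A = R(a) M(t,p) and B = R(a') M(t',p'). Both have orthonormal rows, so for y in R^2
  |y (A - B)|^2 = 2|y|^2 - 2 y.(A B^T y). Now A B^T is the upper-left 2x2 block of a rotation of
  R^3 (M(t,p) consists of two rows of a rotation matrix); if its rotation angle is beta, then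
  y.(A B^T y) >= cos beta |y|^2 = (2 V^2 - 1) |y|^2, where V = cos (beta/2) is computed explicitly by
  the half-angle formulas, as for a product of quaternions. Hence ||A - B|| <= 2 sqrt (1 - V^2).
  Finally cos (x/2) >= 1 - x^2/8 and |sin (x/2)| <= |x|/2 give V >= 1 - 5 eps^2/8, whence
  4 (1 - V^2) < 5 eps^2.
*)
theory Submission
  imports Defs
begin

lemma opnorm_le_of_row_action_bound:
  fixes D :: "real^'n^'m"
  assumes row_bound: "\<And>y. norm (y v* D) \<le> c * norm y"
  shows "opnorm D \<le> c"
proof -
  have "0 \<le> c * norm (1 :: real^'m)"
    using row_bound[of 1] norm_ge_zero order_trans by blast
  then have c_nonneg: "0 \<le> c"
    by (simp add: zero_le_mult_iff)
  show ?thesis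
    unfolding opnorm_def
  proof (rule onorm_le)
    fix x :: "real^'n"
    have "norm (D *v x) ^ 2 = ((D *v x) v* D) \<bullet> x"
      by (simp only: dot_lmul_matrix power2_norm_eq_inner)
    also have "\<dots> \<le> c * norm (D *v x) * norm x"
      using Cauchy_Schwarz_ineq2[of "(D *v x) v* D" x] row_bound[of "D *v x"]
      by (meson mult_right_mono norm_ge_zero order_trans abs_le_iff)
    finally show "norm (D *v x) \<le> c * norm x"
      by (cases "D *v x = 0") (simp_all add: c_nonneg power2_eq_square mult.assoc mult_le_cancel_left_pos)
  qed
qed

lemma inner_row_action:
  fixes A B :: "real^'n^'m"
  shows "(y v* A) \<bullet> (y v* B) = y \<bullet> (A ** transpose B *v y)"
  by (simp add: dot_lmul_matrix flip: matrix_vector_mul_assoc)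

lemma norm_row_action_orthonormal:
  fixes A :: "real^'n^'m"
  assumes "A ** transpose A = mat 1"
  shows "norm (y v* A) = norm y"
  using inner_row_action[of y A A] assms by (simp add: norm_eq_sqrt_inner)

lemma norm_row_action_diff_sq:
  fixes A B :: "real^'n^'m"
  assumes "A ** transpose A = mat 1" and "B ** transpose B = mat 1"
  shows "norm (y v* (A - B)) ^ 2 = 2 * norm y ^ 2 - 2 * (y \<bullet> (A ** transpose B *v y))"
proof -
  have "norm (y v* (A - B)) ^ 2 = norm (y v* A) ^ 2 + norm (y v* B) ^ 2 - 2 * ((y v* A) \<bullet> (y v* B))"
    by (simp add: vector_matrix_mult_diff_rdistrib power2_norm_eq_inner inner_diff inner_commute)
  then show ?thesis
    by (simp add: norm_row_action_orthonormal assms inner_row_action)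
qed

lemma rotR_mul: "rotR a ** rotR b = rotR (a + b)"
  by (simp add: vec_eq_iff forall_2 matrix_matrix_mult_def sum_2 rotR_def cos_add sin_add algebra_simps)

lemma transpose_rotR: "transpose (rotR a) = rotR (- a)"
  by (simp add: vec_eq_iff forall_2 transpose_def rotR_def)

lemma rotR_zero: "rotR 0 = mat 1"
  by (simp add: vec_eq_iff forall_2 mat_def rotR_def)

lemma rotR_orthonormal: "rotR a ** transpose (rotR a) = mat 1"
  by (simp add: transpose_rotR rotR_mul rotR_zero)

definition matM_gram :: "real \<Rightarrow> real \<Rightarrow> real \<Rightarrow> real^2^2" where
  "matM_gram d p q = vector [vector [cos d, sin d * cos q],
                             vector [- sin d * cos p, cos d * cos p * cos q + sin p * sin q]]"

lemma matM_mul_transpose: "matM t p ** transpose (matM t' p') = matM_gram (t - t') p p'"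
  by (simp add: vec_eq_iff forall_2 matrix_matrix_mult_def sum_3 transpose_def
      matM_def matM_gram_def cos_diff sin_diff algebra_simps)

lemma matM_gram_same: "matM_gram 0 p p = mat 1"
  by (simp add: vec_eq_iff forall_2 mat_def matM_gram_def flip: power2_eq_square)

lemma rotR_matM_orthonormal: "rotR a ** matM t p ** transpose (rotR a ** matM t p) = mat 1"
proof -
  have "rotR a ** matM t p ** transpose (rotR a ** matM t p)
      = rotR a ** (matM t p ** transpose (matM t p)) ** transpose (rotR a)"
    by (simp add: matrix_transpose_mul matrix_mul_assoc)
  also have "\<dots> = mat 1"
    by (simp add: matM_mul_transpose matM_gram_same rotR_orthonormal)
  finally show ?thesis .
qed

text \<open>\<open>matM_gram d p q ** rotR b\<close> is the upper-left \<open>2\<times>2\<close> block of a rotation of \<open>\<real>\<^sup>3\<close>;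
  this is the cosine of half its rotation angle, the scalar part of the corresponding unit quaternion.\<close>

definition half_angle_cos :: "real \<Rightarrow> real \<Rightarrow> real \<Rightarrow> real \<Rightarrow> real" where
  "half_angle_cos b d p q =
     cos (b/2) * cos (d/2) * cos ((p - q)/2) + sin (b/2) * sin (d/2) * cos ((p + q)/2)"

text \<open>Coordinate form of \<open>z \<bullet> Q z = cos \<beta> |z|\<^sup>2 + (1 - cos \<beta>) (n \<bullet> z)\<^sup>2\<close> for a rotation \<open>Q\<close>
  of angle \<open>\<beta>\<close> about the unit axis \<open>n\<close>, with \<open>cos \<beta> = 2 V\<^sup>2 - 1\<close>.\<close>

lemma half_angle_identity:
  fixes b d p q u v :: real
  shows "u * (cos d * (cos b * u - sin b * v) + sin d * cos q * (sin b * u + cos b * v))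
       + v * (- sin d * cos p * (cos b * u - sin b * v)
               + (cos d * cos p * cos q + sin p * sin q) * (sin b * u + cos b * v))
       - (2 * half_angle_cos b d p q ^ 2 - 1) * (u^2 + v^2)
     = 2 * ((cos (b/2) * cos (d/2) * sin ((p - q)/2) + sin (b/2) * sin (d/2) * sin ((p + q)/2)) * u
          + (cos (b/2) * sin (d/2) * sin ((p + q)/2) - sin (b/2) * cos (d/2) * sin ((p - q)/2)) * v)^2"
proof -
  have double: "cos x = cos (x/2)^2 - sin (x/2)^2" "sin x = 2 * sin (x/2) * cos (x/2)" for x :: real
    using cos_double[of "x/2"] sin_double[of "x/2"] by simp_all
  have "(p - q)/2 = p/2 - q/2" "(p + q)/2 = p/2 + q/2"
    by simp_all
  then have sum_diff: "cos ((p - q)/2) = cos (p/2) * cos (q/2) + sin (p/2) * sin (q/2)"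
    "cos ((p + q)/2) = cos (p/2) * cos (q/2) - sin (p/2) * sin (q/2)"
    "sin ((p - q)/2) = sin (p/2) * cos (q/2) - cos (p/2) * sin (q/2)"
    "sin ((p + q)/2) = sin (p/2) * cos (q/2) + cos (p/2) * sin (q/2)"
    by (simp_all only: cos_diff cos_add sin_diff sin_add)
  show ?thesis
    unfolding half_angle_cos_def sum_diff double[of b] double[of d] double[of p] double[of q]
    using sin_cos_squared_add[of "b/2"] sin_cos_squared_add[of "d/2"]
      sin_cos_squared_add[of "p/2"] sin_cos_squared_add[of "q/2"]
    by algebra
qed

lemma quadratic_form_matM_gram_rotR:
  fixes z :: "real^2"
  shows "(2 * half_angle_cos b d p q ^ 2 - 1) * norm z ^ 2 \<le> z \<bullet> (matM_gram d p q ** rotR b *v z)"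
proof -
  have "norm z ^ 2 = (z$1)^2 + (z$2)^2"
    unfolding power2_norm_eq_inner by (simp add: inner_vec_def sum_2 power2_eq_square)
  moreover have "z \<bullet> (matM_gram d p q ** rotR b *v z)
      = z$1 * (cos d * (cos b * z$1 - sin b * z$2) + sin d * cos q * (sin b * z$1 + cos b * z$2))
      + z$2 * (- sin d * cos p * (cos b * z$1 - sin b * z$2)
               + (cos d * cos p * cos q + sin p * sin q) * (sin b * z$1 + cos b * z$2))"
    by (simp add: inner_vec_def sum_2 matrix_vector_mult_def matrix_matrix_mult_def
        matM_gram_def rotR_def algebra_simps)
  ultimately show ?thesis
    using half_angle_identity[where b=b and d=d and p=p and q=q and u="z$1" and v="z$2"]
    by (metis diff_ge_0_iff_ge mult_nonneg_nonneg zero_le_numeral zero_le_power2)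
qed

lemma quadratic_form_rotR_matM:
  fixes y :: "real^2"
  shows "(2 * half_angle_cos (a - a') (t - t') p p' ^ 2 - 1) * norm y ^ 2
    \<le> y \<bullet> (rotR a ** matM t p ** transpose (rotR a' ** matM t' p') *v y)"
proof -
  define z where "z = rotR (- a) *v y"
  have z_row: "z = y v* rotR a"
    by (simp add: z_def flip: transpose_rotR)
  have adjoint: "y \<bullet> (rotR a *v w) = z \<bullet> w" for w
    by (simp add: z_row dot_lmul_matrix)
  have "rotR a ** matM t p ** transpose (rotR a' ** matM t' p')
      = rotR a ** (matM t p ** transpose (matM t' p')) ** transpose (rotR a')"
    by (simp add: matrix_transpose_mul matrix_mul_assoc)
  also have "\<dots> = rotR a ** (matM_gram (t - t') p p' ** (rotR (a - a') ** rotR (- a)))"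
    by (simp add: matM_mul_transpose transpose_rotR rotR_mul matrix_mul_assoc)
  finally have "y \<bullet> (rotR a ** matM t p ** transpose (rotR a' ** matM t' p') *v y)
      = z \<bullet> (matM_gram (t - t') p p' ** rotR (a - a') *v z)"
    by (simp add: adjoint flip: z_def matrix_vector_mul_assoc)
  moreover have "norm z = norm y"
    unfolding z_row by (rule norm_row_action_orthonormal[OF rotR_orthonormal])
  ultimately show ?thesis
    using quadratic_form_matM_gram_rotR[of "a - a'" "t - t'" p p' z] by simp
qed

lemma opnorm_rotR_matM_diff_le:
  "opnorm (rotR a ** matM t p - rotR a' ** matM t' p')
    \<le> sqrt (4 * (1 - half_angle_cos (a - a') (t - t') p p' ^ 2))"
proof (rule opnorm_le_of_row_action_bound)
  fix y :: "real^2"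
  let ?V = "half_angle_cos (a - a') (t - t') p p'"
  have "norm (y v* (rotR a ** matM t p - rotR a' ** matM t' p')) ^ 2
      = 2 * norm y ^ 2 - 2 * (y \<bullet> (rotR a ** matM t p ** transpose (rotR a' ** matM t' p') *v y))"
    by (rule norm_row_action_diff_sq[OF rotR_matM_orthonormal rotR_matM_orthonormal])
  also have "\<dots> \<le> 4 * (1 - ?V ^ 2) * norm y ^ 2"
    using quadratic_form_rotR_matM[of a a' t t' p p' y] by (simp add: algebra_simps)
  finally have "norm (y v* (rotR a ** matM t p - rotR a' ** matM t' p'))
      \<le> sqrt (4 * (1 - ?V ^ 2) * norm y ^ 2)"
    by (rule real_le_rsqrt)
  then show "norm (y v* (rotR a ** matM t p - rotR a' ** matM t' p'))
      \<le> sqrt (4 * (1 - ?V ^ 2)) * norm y"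
    by (simp add: real_sqrt_mult)
qed

lemma cos_ge_one_minus_sq_half: "1 - x^2/2 \<le> cos (x::real)"
proof -
  have "sin (x/2)^2 \<le> (x/2)^2"
    using abs_sin_x_le_abs_x abs_le_square_iff by blast
  then show ?thesis
    using cos_double_sin[of "x/2"] by (simp add: power_divide)
qed

lemma half_angle_cos_sq_close_to_one:
  fixes \<epsilon> b d p q :: real
  assumes "\<epsilon> > 0" and "\<bar>b\<bar> \<le> \<epsilon>" and "\<bar>d\<bar> \<le> \<epsilon>" and "\<bar>p - q\<bar> \<le> \<epsilon>"
  shows "4 * (1 - half_angle_cos b d p q ^ 2) < 5 * \<epsilon>^2"
proof (cases "4 < 5 * \<epsilon>^2")
  case True
  then show ?thesis
    using zero_le_power2[of "half_angle_cos b d p q"] unfolding right_diff_distrib by linarith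
next
  case False
  define u where "u = \<epsilon>^2/4"
  have u: "0 < u" "u \<le> 1/5"
    using False assms(1) by (simp_all add: u_def)
  have cos_lb: "1 - u/2 \<le> cos (x/2)" if "\<bar>x\<bar> \<le> \<epsilon>" for x
  proof -
    have "x^2 \<le> \<epsilon>^2"
      using that assms(1) by (simp add: abs_le_square_iff[symmetric])
    then show ?thesis
      using cos_ge_one_minus_sq_half[of "x/2"] by (simp add: u_def power_divide)
  qed
  have sin_ub: "\<bar>sin (x/2)\<bar> \<le> \<epsilon>/2" if "\<bar>x\<bar> \<le> \<epsilon>" for x
    using abs_sin_x_le_abs_x[of "x/2"] that by simp
  have "(1 - u/2)^3 \<le> cos (b/2) * cos (d/2) * cos ((p - q)/2)"
    using cos_lb[OF assms(2)] cos_lb[OF assms(3)] cos_lb[OF assms(4)] u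
    by (simp add: power3_eq_cube mult_mono)
  moreover have "\<bar>sin (b/2) * sin (d/2) * cos ((p + q)/2)\<bar> \<le> \<epsilon>/2 * (\<epsilon>/2) * 1"
    unfolding abs_mult using sin_ub[OF assms(2)] sin_ub[OF assms(3)] abs_cos_le_one
    by (intro mult_mono) simp_all
  moreover have "1 - 3/2 * u \<le> (1 - u/2)^3"
    using Bernoulli_inequality[of "- u/2" 3] u by simp
  ultimately have V_lb: "1 - 5/2 * u \<le> half_angle_cos b d p q"
    unfolding half_angle_cos_def u_def by (simp add: power2_eq_square abs_le_iff)
  have "(1 - 5/2 * u)^2 \<le> half_angle_cos b d p q ^ 2"
    using V_lb u by (intro power_mono) simp_all
  moreover have "(1 - 5/2 * u)^2 = 1 - 5 * u + 25/4 * u^2"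
    by (simp add: power2_eq_square algebra_simps)
  moreover have "0 < u^2"
    using u by simp
  moreover have "\<epsilon>^2 = 4 * u"
    by (simp add: u_def)
  ultimately show ?thesis
    unfolding right_diff_distrib by linarith
qed

theorem lemma3p8:
  fixes \<epsilon> \<theta> \<theta>' \<phi> \<phi>' \<alpha> \<alpha>' :: real
  assumes "\<epsilon> > 0"
    and "\<bar>\<theta> - \<theta>'\<bar> \<le> \<epsilon>" and "\<bar>\<phi> - \<phi>'\<bar> \<le> \<epsilon>" and "\<bar>\<alpha> - \<alpha>'\<bar> \<le> \<epsilon>"
  shows "opnorm (rotR \<alpha> ** matM \<theta> \<phi> - rotR \<alpha>' ** matM \<theta>' \<phi>') < sqrt 5 * \<epsilon>"
proof -
  have "opnorm (rotR \<alpha> ** matM \<theta> \<phi> - rotR \<alpha>' ** matM \<theta>' \<phi>')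
      \<le> sqrt (4 * (1 - half_angle_cos (\<alpha> - \<alpha>') (\<theta> - \<theta>') \<phi> \<phi>' ^ 2))"
    by (rule opnorm_rotR_matM_diff_le)
  also have "\<dots> < sqrt (5 * \<epsilon>^2)"
    using half_angle_cos_sq_close_to_one[OF assms(1,4,2,3)] by simp
  also have "\<dots> = sqrt 5 * \<epsilon>"
    using assms(1) by (simp add: real_sqrt_mult)
  finally show ?thesis .
qed

end
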